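(* Let $(G,\alpha)$ be a finite Hom-group and $H\preceq G$. Then $|H|$ divides $|G|$.
   Context: A Hom-group is a tuple $(G,\mu,1,\alpha)$ where $G$ is a set, $\mu:G\times G\to G$ is a binary operation written $\mu(g,h)=gh$, $1\in G$ is a distinguished element, and $\alpha:G\to G$ is a bijection, such that: (1) Hom-associativity: $\alpha(g)(hk)=(gh)\alpha(k)$ for all $g,h,k\in G$; (2) $\alpha(gk)=\alpha(g)\alpha(k)$ for all $g,k$; (3) Hom-unitality: $g1=1g=\alpha(g)$ for all $g$, and $\alpha(1)=1$; (4) for every $g\in G$ there exists $g^{-1}\in G$ with $gg^{-1}=g^{-1}g=1$ (such an inverse is unique). A Hom-subgroup of $(G,\alpha)$ is a subset $H\subseteq G$ such that $H$, with the restriction of the multiplication of $G$, the element $1$, and the restriction of $\alpha$, is itself a Hom-group (in particular $1\in H$, $H$ is closed under multiplication and inverses, and $\alpha$ restricts to a bijection $H\to H$). We write $H\preceq G$. *)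

theory Defs
  imports Main
begin

definition hom_group :: "'a set \<Rightarrow> ('a \<Rightarrow> 'a \<Rightarrow> 'a) \<Rightarrow> 'a \<Rightarrow> ('a \<Rightarrow> 'a) \<Rightarrow> bool" where
  "hom_group G mult one alpha \<longleftrightarrow>
     (\<forall>g\<in>G. \<forall>h\<in>G. mult g h \<in> G) \<and>
     one \<in> G \<and>
     bij_betw alpha G G \<and>
     (\<forall>g\<in>G. \<forall>h\<in>G. \<forall>k\<in>G. mult (alpha g) (mult h k) = mult (mult g h) (alpha k)) \<and>
     (\<forall>g\<in>G. \<forall>k\<in>G. alpha (mult g k) = mult (alpha g) (alpha k)) \<and>
     (\<forall>g\<in>G. mult g one = alpha g \<and> mult one g = alpha g) \<and>
     alpha one = one \<and>
     (\<forall>g\<in>G. \<exists>h\<in>G. mult g h = one \<and> mult h g = one)"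

definition hom_subgroup :: "'a set \<Rightarrow> 'a set \<Rightarrow> ('a \<Rightarrow> 'a \<Rightarrow> 'a) \<Rightarrow> 'a \<Rightarrow> ('a \<Rightarrow> 'a) \<Rightarrow> bool" where
  "hom_subgroup H G mult one alpha \<longleftrightarrow> H \<subseteq> G \<and> hom_group H mult one alpha"

end

theory Submission
  imports Defs "HOL-Algebra.Coset"
begin

text \<open>Untwisting: for a Hom-group \<open>(G, \<mu>, 1, \<alpha>)\<close> the product \<open>x \<star> y = \<alpha>\<inverse>(\<mu> x y)\<close> makes \<open>G\<close> an
  ordinary group with the same unit, because Hom-associativity applied to \<open>\<alpha>\<inverse> x, \<alpha>\<inverse> y, \<alpha>\<inverse> z\<close>
  is exactly associativity of \<open>\<star>\<close>. A Hom-subgroup is closed under \<open>\<alpha>\<inverse>\<close>, hence is a subgroup of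
  the untwisted group, and Lagrange's theorem applies.\<close>

definition untwist :: "'a set \<Rightarrow> ('a \<Rightarrow> 'a \<Rightarrow> 'a) \<Rightarrow> 'a \<Rightarrow> ('a \<Rightarrow> 'a) \<Rightarrow> 'a monoid" where
  "untwist G mu e alpha =
     \<lparr>carrier = G, monoid.mult = (\<lambda>x y. inv_into G alpha (mu x y)), one = e\<rparr>"

lemma carrier_untwist [simp]: "carrier (untwist G mu e alpha) = G"
  and one_untwist [simp]: "\<one>\<^bsub>untwist G mu e alpha\<^esub> = e"
  and mult_untwist [simp]: "x \<otimes>\<^bsub>untwist G mu e alpha\<^esub> y = inv_into G alpha (mu x y)"
  by (simp_all add: untwist_def)

lemma inv_into_hom_mult:
  assumes "hom_group G mu e alpha" and "x \<in> G" and "y \<in> G"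
  shows "inv_into G alpha (mu x y) = mu (inv_into G alpha x) (inv_into G alpha y)"
proof -
  have bij: "bij_betw alpha G G" and cl: "\<And>g h. g \<in> G \<Longrightarrow> h \<in> G \<Longrightarrow> mu g h \<in> G"
    and alpha_mult: "\<And>g k. g \<in> G \<Longrightarrow> k \<in> G \<Longrightarrow> alpha (mu g k) = mu (alpha g) (alpha k)"
    using assms(1) unfolding hom_group_def by blast+
  have x': "inv_into G alpha x \<in> G" and y': "inv_into G alpha y \<in> G"
    using bij_betwE[OF bij_betw_inv_into[OF bij]] assms(2,3) by simp_all
  have "alpha (mu (inv_into G alpha x) (inv_into G alpha y)) = mu x y"
    using alpha_mult[OF x' y'] bij assms(2,3) by (simp add: bij_betw_inv_into_right)
  then show ?thesis
    using bij cl[OF x' y'] by (metis bij_betw_inv_into_left)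
qed

lemma group_untwist:
  assumes "hom_group G mu e alpha"
  shows "group (untwist G mu e alpha)"
proof -
  let ?b = "inv_into G alpha"
  have cl: "\<And>g h. g \<in> G \<Longrightarrow> h \<in> G \<Longrightarrow> mu g h \<in> G" and e_G: "e \<in> G"
    and bij: "bij_betw alpha G G"
    and hass: "\<And>g h k. g \<in> G \<Longrightarrow> h \<in> G \<Longrightarrow> k \<in> G \<Longrightarrow>
                 mu (alpha g) (mu h k) = mu (mu g h) (alpha k)"
    and unit: "\<And>g. g \<in> G \<Longrightarrow> mu e g = alpha g"
    and alpha_e: "alpha e = e"
    and inv: "\<And>g. g \<in> G \<Longrightarrow> \<exists>h\<in>G. mu g h = e \<and> mu h g = e"
    using assms unfolding hom_group_def by blast+
  have bG: "\<And>x. x \<in> G \<Longrightarrow> ?b x \<in> G" and ab: "\<And>x. x \<in> G \<Longrightarrow> alpha (?b x) = x"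
    and ba: "\<And>x. x \<in> G \<Longrightarrow> ?b (alpha x) = x"
    using bij by (auto simp: bij_betw_inv_into_right bij_betw_inv_into_left
                             bij_betwE[OF bij_betw_inv_into])
  have b_e: "?b e = e" using ba[OF e_G] alpha_e by simp
  show ?thesis
  proof (rule groupI)
    fix x y z assume "x \<in> carrier (untwist G mu e alpha)" "y \<in> carrier (untwist G mu e alpha)"
      "z \<in> carrier (untwist G mu e alpha)"
    then have x: "x \<in> G" and y: "y \<in> G" and z: "z \<in> G" by simp_all
    have "mu (?b (mu x y)) z = mu (mu (?b x) (?b y)) (alpha (?b z))"
      using inv_into_hom_mult[OF assms x y] ab[OF z] by simp
    also have "\<dots> = mu (alpha (?b x)) (mu (?b y) (?b z))"
      using hass bG x y z by simp
    also have "\<dots> = mu x (?b (mu y z))"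
      using ab[OF x] inv_into_hom_mult[OF assms y z] by simp
    finally show "x \<otimes>\<^bsub>untwist G mu e alpha\<^esub> y \<otimes>\<^bsub>untwist G mu e alpha\<^esub> z =
        x \<otimes>\<^bsub>untwist G mu e alpha\<^esub> (y \<otimes>\<^bsub>untwist G mu e alpha\<^esub> z)"
      by simp
  next
    fix x assume "x \<in> carrier (untwist G mu e alpha)"
    then obtain h where "h \<in> G" "mu h x = e" using inv by auto
    then show "\<exists>y\<in>carrier (untwist G mu e alpha).
        y \<otimes>\<^bsub>untwist G mu e alpha\<^esub> x = \<one>\<^bsub>untwist G mu e alpha\<^esub>"
      using b_e by auto
  qed (use cl e_G bG unit ba in auto)
qed

lemma subgroup_untwist:
  assumes hom_G: "hom_group G mu e alpha" and hom_H: "hom_subgroup H G mu e alpha"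
  shows "subgroup H (untwist G mu e alpha)"
proof -
  interpret untwisted: group "untwist G mu e alpha" using group_untwist[OF hom_G] .
  have HG: "H \<subseteq> G" and bij_G: "bij_betw alpha G G" and bij_H: "bij_betw alpha H H"
    and alpha_e: "alpha e = e" and e_H: "e \<in> H" and cl: "\<And>a c. a \<in> H \<Longrightarrow> c \<in> H \<Longrightarrow> mu a c \<in> H"
    and inv: "\<And>a. a \<in> H \<Longrightarrow> \<exists>h\<in>H. mu a h = e \<and> mu h a = e"
    using hom_G hom_H unfolding hom_subgroup_def hom_group_def by blast+
  have inv_into_H: "inv_into G alpha x \<in> H" if "x \<in> H" for x
  proof -
    obtain z where "z \<in> H" "x = alpha z" using bij_H \<open>x \<in> H\<close> by (auto simp: bij_betw_def)
    then show ?thesis using HG bij_G by (auto simp: bij_betw_def)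
  qed
  show ?thesis
  proof (rule untwisted.subgroupI)
    fix a assume a: "a \<in> H"
    then obtain h where h: "h \<in> H" "mu h a = e" using inv by blast
    have "h \<otimes>\<^bsub>untwist G mu e alpha\<^esub> a = \<one>\<^bsub>untwist G mu e alpha\<^esub>"
      using h e_H HG bij_G alpha_e by (metis bij_betw_inv_into_left mult_untwist one_untwist subsetD)
    then show "inv\<^bsub>untwist G mu e alpha\<^esub> a \<in> H"
      using untwisted.inv_equality a h HG by force
  qed (use HG e_H cl inv_into_H in auto)
qed

theorem mainTheorem9:
  fixes G H :: "'a set" and mult :: "'a \<Rightarrow> 'a \<Rightarrow> 'a" and one :: 'a and alpha :: "'a \<Rightarrow> 'a"
  assumes "hom_group G mult one alpha"
    and "finite G"
    and "hom_subgroup H G mult one alpha"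
  shows "card H dvd card G"
proof -
  have "card (rcosets\<^bsub>untwist G mult one alpha\<^esub> H) * card H = order (untwist G mult one alpha)"
    using group.lagrange[OF group_untwist[OF assms(1)] subgroup_untwist[OF assms(1,3)]] .
  then show ?thesis unfolding order_def carrier_untwist by (metis dvd_triv_right)
qed

end
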